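(* Let $n>2$ and $r=n$. The depth-two claw $G_n$ with $n$ leaves is not $r$-EKR.
   Context: A depth-two claw with $n$ leaves, $G_n$, is the tree with a root $c$ adjacent to vertices $b_1,\dots,b_n$, where each $b_i$ is adjacent to exactly one further vertex $a_i$. An $r$-independent set is an independent set of size $r$. A family of sets is intersecting if every two members meet. A canonically intersecting family is the family of all $r$-independent sets containing a fixed vertex. A graph is $r$-EKR if the maximum size of an intersecting family of $r$-independent sets equals the maximum size of a canonically intersecting family. *)

theory Defs
  imports Main
begin

definition indep_sets :: "'a set \<Rightarrow> ('a \<Rightarrow> 'a \<Rightarrow> bool) \<Rightarrow> nat \<Rightarrow> 'a set set" where
  "indep_sets V adj r =
     {S. S \<subseteq> V \<and> card S = r \<and> (\<forall>x\<in>S. \<forall>y\<in>S. \<not> adj x y)}"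

definition intersecting :: "'a set set \<Rightarrow> bool" where
  "intersecting F \<longleftrightarrow> (\<forall>A\<in>F. \<forall>B\<in>F. A \<inter> B \<noteq> {})"

definition star :: "'a set \<Rightarrow> ('a \<Rightarrow> 'a \<Rightarrow> bool) \<Rightarrow> nat \<Rightarrow> 'a \<Rightarrow> 'a set set" where
  "star V adj r v = {S \<in> indep_sets V adj r. v \<in> S}"

definition r_EKR :: "'a set \<Rightarrow> ('a \<Rightarrow> 'a \<Rightarrow> bool) \<Rightarrow> nat \<Rightarrow> bool" where
  "r_EKR V adj r \<longleftrightarrow>
     Max {card F | F. F \<subseteq> indep_sets V adj r \<and> intersecting F}
       = Max {card (star V adj r v) | v. v \<in> V}"

text \<open>Depth-two claw G_n: root c, middle vertices b_1..b_n, leaves a_1..a_n.\<close>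

datatype claw_vertex = Root | Mid nat | Leaf nat

definition claw_V :: "nat \<Rightarrow> claw_vertex set" where
  "claw_V n = {Root} \<union> Mid ` {1..n} \<union> Leaf ` {1..n}"

fun claw_adj :: "claw_vertex \<Rightarrow> claw_vertex \<Rightarrow> bool" where
  "claw_adj Root (Mid i) = True"
| "claw_adj (Mid i) Root = True"
| "claw_adj (Mid i) (Leaf j) = (i = j)"
| "claw_adj (Leaf j) (Mid i) = (i = j)"
| "claw_adj _ _ = False"

end

theory Submission
  imports Defs
begin

(* It suffices to beat every star by some intersecting family. In the star of a
   leaf a_i, the only member containing no other leaf is {a_i} together with all b_j, j other
   than i. Exchanging it for {b_i} and {c}, each together with all a_j, j other than i, keeps
   the family intersecting (every other member, and each of the two new sets, contains such an
   a_j) and enlarges it by one. The star of c is beaten by adding the set of all leaves, and the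
   star of b_i is no larger than that of a_i, because a_i is pendant at b_i and
   S |-> S - {b_i} + {a_i} embeds the one into the other. *)

lemma finite_indep_sets: "finite V \<Longrightarrow> finite (indep_sets V adj r)"
  unfolding indep_sets_def by (rule finite_subset[of _ "Pow V"]) auto

lemma finite_star: "finite V \<Longrightarrow> finite (star V adj r v)"
  unfolding star_def by (rule finite_subset[OF _ finite_indep_sets]) auto

lemma intersecting_star: "intersecting (star V adj r v)"
  unfolding intersecting_def star_def by auto

lemma intersecting_subset: "intersecting F \<Longrightarrow> G \<subseteq> F \<Longrightarrow> intersecting G"
  unfolding intersecting_def by blast

lemma intersecting_insert_iff:
  "intersecting (insert A F) \<longleftrightarrow> A \<noteq> {} \<and> (\<forall>B\<in>F. A \<inter> B \<noteq> {}) \<and> intersecting F"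
  unfolding intersecting_def by blast

lemma intersecting_exchange:
  assumes "intersecting F" "finite F" "T \<in> F"
    and "B \<notin> F" "R \<notin> F" "B \<noteq> R"
    and "K \<noteq> {}" "K \<subseteq> B" "K \<subseteq> R"
    and meets: "\<And>S. S \<in> F \<Longrightarrow> S \<noteq> T \<Longrightarrow> K \<inter> S \<noteq> {}"
  shows "intersecting (insert R (insert B (F - {T})))"
    and "card (insert R (insert B (F - {T}))) = Suc (card F)"
proof -
  have "intersecting (F - {T})"
    using \<open>intersecting F\<close> by (rule intersecting_subset) blast
  moreover have "B \<noteq> {}" "\<forall>S \<in> F - {T}. B \<inter> S \<noteq> {}"
    using \<open>K \<noteq> {}\<close> \<open>K \<subseteq> B\<close> meets by blast+
  moreover have "R \<noteq> {}" "\<forall>S \<in> insert B (F - {T}). R \<inter> S \<noteq> {}"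
    using \<open>K \<noteq> {}\<close> \<open>K \<subseteq> B\<close> \<open>K \<subseteq> R\<close> meets by blast+
  ultimately show "intersecting (insert R (insert B (F - {T})))"
    unfolding intersecting_insert_iff by blast
  have "card (F - {T}) = card F - 1" "card F > 0"
    using assms(2,3) by (auto simp: card_gt_0_iff)
  then show "card (insert R (insert B (F - {T}))) = Suc (card F)"
    using assms(2,4-6) by (simp add: card_insert_if)
qed

lemma not_r_EKR_if_every_star_beaten:
  assumes "finite V" "V \<noteq> {}"
    and beaten: "\<And>v. v \<in> V \<Longrightarrow>
      \<exists>F \<subseteq> indep_sets V adj r. intersecting F \<and> card (star V adj r v) < card F"
  shows "\<not> r_EKR V adj r"
proof -
  let ?families = "{card F | F. F \<subseteq> indep_sets V adj r \<and> intersecting F}"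
  let ?stars = "{card (star V adj r v) | v. v \<in> V}"
  have "finite ?families"
    using finite_indep_sets[OF \<open>finite V\<close>] by simp
  obtain v where "v \<in> V" and v_max: "Max ?stars = card (star V adj r v)"
    using Max_in[of ?stars] \<open>finite V\<close> \<open>V \<noteq> {}\<close> by auto
  obtain F where "F \<subseteq> indep_sets V adj r" "intersecting F" "card (star V adj r v) < card F"
    using beaten[OF \<open>v \<in> V\<close>] by blast
  then have "Max ?stars < Max ?families"
    using v_max Max_ge[OF \<open>finite ?families\<close>, of "card F"] by fastforce
  then show ?thesis
    unfolding r_EKR_def by simp
qed

lemma card_star_le_card_star_pendant:
  assumes "finite V" "a \<in> V" "adj a b"
    and pendant: "\<And>x. adj a x \<or> adj x a \<Longrightarrow> x = b"
  shows "card (star V adj r b) \<le> card (star V adj r a)"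
proof -
  define swap where "swap S = insert a (S - {b})" for S
  have a_notin: "a \<notin> S" if "S \<in> star V adj r b" for S
    using that \<open>adj a b\<close> unfolding star_def indep_sets_def by blast
  have "inj_on swap (star V adj r b)"
  proof (rule inj_onI)
    fix S T assume S: "S \<in> star V adj r b" and T: "T \<in> star V adj r b" and "swap S = swap T"
    then have "S - {b} = T - {b}"
      using a_notin[OF S] a_notin[OF T] unfolding swap_def by (metis Diff_insert_absorb Diff_iff)
    moreover have "b \<in> S" "b \<in> T"
      using S T unfolding star_def by auto
    ultimately show "S = T"
      by (metis insert_Diff)
  qed
  moreover have "swap ` star V adj r b \<subseteq> star V adj r a"
  proof
    fix X assume "X \<in> swap ` star V adj r b"
    then obtain S where S: "S \<in> star V adj r b" and X: "X = swap S"
      by blast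
    have "S \<subseteq> V" "card S = r" "b \<in> S" and indep: "\<forall>x\<in>S. \<forall>y\<in>S. \<not> adj x y"
      using S unfolding star_def indep_sets_def by auto
    have "finite S"
      using \<open>S \<subseteq> V\<close> \<open>finite V\<close> finite_subset by blast
    have "card X = r"
      using a_notin[OF S] \<open>finite S\<close> \<open>b \<in> S\<close> \<open>card S = r\<close> card_gt_0_iff[of S]
      unfolding X swap_def by (auto simp: card_insert_if)
    moreover have "\<forall>x\<in>X. \<forall>y\<in>X. \<not> adj x y"
      using indep pendant a_notin[OF S] \<open>b \<in> S\<close> unfolding X swap_def by blast
    ultimately show "X \<in> star V adj r a"
      using \<open>S \<subseteq> V\<close> \<open>a \<in> V\<close> unfolding X swap_def star_def indep_sets_def by auto
  qed
  ultimately show ?thesis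
    using finite_star[OF \<open>finite V\<close>] by (rule card_inj_on_le)
qed

lemma finite_claw_V: "finite (claw_V n)"
  by (simp add: claw_V_def)

lemma card_insert_image_remove:
  assumes "inj f" "v \<notin> range f" "finite A" "i \<in> A"
  shows "card (insert v (f ` (A - {i}))) = card A"
proof -
  have "card (f ` (A - {i})) = card A - 1"
    using assms by (simp add: card_image inj_on_subset)
  moreover have "v \<notin> f ` (A - {i})" "card A > 0"
    using assms card_gt_0_iff by auto
  ultimately show ?thesis
    using \<open>finite A\<close> by simp
qed

lemma claw_indep_with_Root_subset_leaves:
  assumes "S \<in> indep_sets (claw_V n) claw_adj r" "Root \<in> S"
  shows "S - {Root} \<subseteq> Leaf ` {1..n}"
proof
  fix x assume x: "x \<in> S - {Root}"
  then have "x \<in> claw_V n" "\<not> claw_adj Root x"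
    using assms unfolding indep_sets_def by auto
  then show "x \<in> Leaf ` {1..n}"
    using x by (cases x) (auto simp: claw_V_def)
qed

lemma claw_leaf_star_meets_other_leaves:
  assumes "n > 2" and S: "S \<in> star (claw_V n) claw_adj n (Leaf i)"
    and "S \<noteq> insert (Leaf i) (Mid ` ({1..n} - {i}))"
  shows "\<exists>j \<in> {1..n} - {i}. Leaf j \<in> S"
proof (rule ccontr)
  assume no_other_leaf: "\<not> (\<exists>j \<in> {1..n} - {i}. Leaf j \<in> S)"
  have S_indep: "S \<in> indep_sets (claw_V n) claw_adj n" and "Leaf i \<in> S"
    using S unfolding star_def by auto
  then have "S \<subseteq> claw_V n" "card S = n" and indep: "\<forall>x\<in>S. \<forall>y\<in>S. \<not> claw_adj x y"
    unfolding indep_sets_def by auto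
  then have "i \<in> {1..n}"
    using \<open>Leaf i \<in> S\<close> by (auto simp: claw_V_def)
  show False
  proof (cases "Root \<in> S")
    case True
    have "S \<subseteq> {Root, Leaf i}"
      using claw_indep_with_Root_subset_leaves[OF S_indep True] no_other_leaf by blast
    then have "card S \<le> 2"
      using card_mono[of "{Root, Leaf i}" S] by (simp add: card_insert_if)
    then show False
      using \<open>card S = n\<close> \<open>n > 2\<close> by simp
  next
    case False
    let ?T = "insert (Leaf i) (Mid ` ({1..n} - {i}))"
    have "S \<subseteq> ?T"
    proof
      fix x assume "x \<in> S"
      then have "x \<in> claw_V n" "\<not> claw_adj x (Leaf i)"
        using \<open>S \<subseteq> claw_V n\<close> indep \<open>Leaf i \<in> S\<close> by auto
      then show "x \<in> ?T"
        using \<open>x \<in> S\<close> False no_other_leaf by (cases x) (auto simp: claw_V_def)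
    qed
    moreover have "card ?T = n"
      using card_insert_image_remove[of Mid "Leaf i" "{1..n}" i] \<open>i \<in> {1..n}\<close>
      by (auto simp: inj_def)
    ultimately show False
      using card_subset_eq[of ?T S] \<open>card S = n\<close> assms(3) by auto
  qed
qed

lemma claw_leaf_star_beaten:
  assumes "n > 2" "i \<in> {1..n}"
  shows "\<exists>F \<subseteq> indep_sets (claw_V n) claw_adj n.
           intersecting F \<and> card (star (claw_V n) claw_adj n (Leaf i)) < card F"
proof -
  let ?indep = "indep_sets (claw_V n) claw_adj n"
  let ?star = "star (claw_V n) claw_adj n (Leaf i)"
  define K where "K = Leaf ` ({1..n} - {i})"
  define T where "T = insert (Leaf i) (Mid ` ({1..n} - {i}))"
  define B where "B = insert (Mid i) K"
  define R where "R = insert Root K"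
  have "card T = n" "card B = n" "card R = n"
    unfolding T_def B_def R_def K_def
    using card_insert_image_remove[of Mid "Leaf i" "{1..n}" i]
      card_insert_image_remove[of Leaf "Mid i" "{1..n}" i]
      card_insert_image_remove[of Leaf Root "{1..n}" i] \<open>i \<in> {1..n}\<close>
    by (auto simp: inj_def)
  then have "T \<in> ?star" "B \<in> ?indep" "R \<in> ?indep"
    using \<open>i \<in> {1..n}\<close> unfolding T_def B_def R_def K_def star_def indep_sets_def claw_V_def
    by auto
  have "Leaf (if i = 1 then 2 else 1) \<in> K"
    using \<open>n > 2\<close> \<open>i \<in> {1..n}\<close> unfolding K_def by auto
  then have "K \<noteq> {}"
    by blast
  have meets_K: "K \<inter> S \<noteq> {}" if "S \<in> ?star" "S \<noteq> T" for S
    using claw_leaf_star_meets_other_leaves[OF \<open>n > 2\<close> that[unfolded T_def]]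
    unfolding K_def by blast
  have "B \<notin> ?star" "R \<notin> ?star" "B \<noteq> R" "K \<subseteq> B" "K \<subseteq> R"
    unfolding B_def R_def K_def star_def by auto
  note exchange = intersecting_exchange[OF intersecting_star finite_star[OF finite_claw_V]
      \<open>T \<in> ?star\<close> this(1-3) \<open>K \<noteq> {}\<close> this(4-5) meets_K]
  have "insert R (insert B (?star - {T})) \<subseteq> ?indep"
    using \<open>B \<in> ?indep\<close> \<open>R \<in> ?indep\<close> unfolding star_def by blast
  with exchange show ?thesis
    by (metis lessI)
qed

lemma claw_Root_star_beaten:
  assumes "n \<ge> 2"
  shows "\<exists>F \<subseteq> indep_sets (claw_V n) claw_adj n.
           intersecting F \<and> card (star (claw_V n) claw_adj n Root) < card F"
proof -
  let ?star = "star (claw_V n) claw_adj n Root"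
  define L where "L = Leaf ` {1..n}"
  have "card L = n"
    unfolding L_def by (simp add: card_image inj_on_def)
  then have "L \<in> indep_sets (claw_V n) claw_adj n"
    unfolding L_def indep_sets_def claw_V_def by auto
  moreover have "L \<notin> ?star"
    unfolding L_def star_def by auto
  moreover have "L \<inter> S \<noteq> {}" if S: "S \<in> ?star" for S
  proof -
    have S_indep: "S \<in> indep_sets (claw_V n) claw_adj n" and "Root \<in> S"
      using S unfolding star_def by auto
    then have "card (S - {Root}) = n - 1"
      unfolding indep_sets_def by simp
    then have "card (S - {Root}) > 0"
      using \<open>n \<ge> 2\<close> by simp
    then have "S - {Root} \<noteq> {}"
      using card_gt_0_iff by blast
    then show ?thesis
      using claw_indep_with_Root_subset_leaves[OF S_indep \<open>Root \<in> S\<close>] unfolding L_def by blast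
  qed
  moreover have "L \<noteq> {}"
    using \<open>card L = n\<close> \<open>n \<ge> 2\<close> by auto
  ultimately have "intersecting (insert L ?star)"
    unfolding intersecting_insert_iff by (auto simp: intersecting_star)
  moreover have "insert L ?star \<subseteq> indep_sets (claw_V n) claw_adj n"
    using \<open>L \<in> indep_sets (claw_V n) claw_adj n\<close> unfolding star_def by blast
  moreover have "card ?star < card (insert L ?star)"
    using \<open>L \<notin> ?star\<close> finite_star[OF finite_claw_V] by simp
  ultimately show ?thesis
    by blast
qed

lemma claw_Mid_star_beaten:
  assumes "n > 2" "i \<in> {1..n}"
  shows "\<exists>F \<subseteq> indep_sets (claw_V n) claw_adj n.
           intersecting F \<and> card (star (claw_V n) claw_adj n (Mid i)) < card F"
proof -
  have "card (star (claw_V n) claw_adj n (Mid i)) \<le> card (star (claw_V n) claw_adj n (Leaf i))"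
  proof (rule card_star_le_card_star_pendant)
    show "Leaf i \<in> claw_V n"
      using \<open>i \<in> {1..n}\<close> by (simp add: claw_V_def)
    fix x assume "claw_adj (Leaf i) x \<or> claw_adj x (Leaf i)"
    then show "x = Mid i"
      by (cases x) auto
  qed (simp_all add: finite_claw_V)
  with claw_leaf_star_beaten[OF assms] show ?thesis
    by (meson le_less_trans)
qed

theorem proposition9p4:
  fixes n :: nat
  assumes "n > 2"
  shows "\<not> r_EKR (claw_V n) claw_adj n"
proof (rule not_r_EKR_if_every_star_beaten)
  show "finite (claw_V n)" "claw_V n \<noteq> {}"
    by (auto simp: finite_claw_V claw_V_def)
  fix v assume "v \<in> claw_V n"
  then consider "v = Root" | i where "i \<in> {1..n}" "v = Mid i" | i where "i \<in> {1..n}" "v = Leaf i"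
    unfolding claw_V_def by blast
  then show "\<exists>F \<subseteq> indep_sets (claw_V n) claw_adj n.
               intersecting F \<and> card (star (claw_V n) claw_adj n v) < card F"
    using claw_Root_star_beaten claw_Mid_star_beaten claw_leaf_star_beaten \<open>n > 2\<close>
    by cases auto
qed

end
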